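(* Let $w$ be a nonempty string, and for $1 \le j \le |\mathit{LFCand}(w)|$ let $s_j$ be the $j$-th shortest string of $\mathit{LFCand}(w)$. Then $|s_{j+1}| > 2|s_j|$ for every $1 \le j < |\mathit{LFCand}(w)|$.
   Context: Let $\Sigma$ be a finite ordered alphabet, $\Sigma^+$ the set of nonempty strings over $\Sigma$. For nonempty strings $x,y$, write $x \prec y$ if either $x$ is a proper prefix of $y$, or at the first position $k$ where $x$ and $y$ differ we have $x[k] \prec y[k]$. For a set $S$ of nonempty strings, $\min_\prec S$ is its lexicographically smallest element. $\mathit{Suffix}(w)$ denotes the set of (nonempty) suffixes of $w$. For a nonempty string $w$, $\mathit{LFCand}(w) = \{x \in \mathit{Suffix}(w) \mid \exists y \in \Sigma^+ \text{ such that } xy = \min_\prec \mathit{Suffix}(wy)\}$ (its elements are suffixes of $w$, hence have distinct lengths). *)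

theory Defs
  imports Main
begin

definition lex_less :: "'a::linorder list \<Rightarrow> 'a list \<Rightarrow> bool" where
  "lex_less x y \<longleftrightarrow>
     (length x < length y \<and> take (length x) y = x) \<or>
     (\<exists>k < min (length x) (length y). take k x = take k y \<and> x ! k < y ! k)"

definition Suffixes :: "'a list \<Rightarrow> 'a list set" where
  "Suffixes w = {drop i w | i. i < length w}"

definition is_lexmin :: "'a::linorder list set \<Rightarrow> 'a list \<Rightarrow> bool" where
  "is_lexmin S m \<longleftrightarrow> m \<in> S \<and> (\<forall>z\<in>S. z = m \<or> lex_less m z)"

definition LFCand :: "'a::linorder list \<Rightarrow> 'a list set" where
  "LFCand w = {x \<in> Suffixes w. \<exists>y. y \<noteq> [] \<and> is_lexmin (Suffixes (w @ y)) (x @ y)}"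

end

theory Submission
  imports Defs
begin

text \<open>Let \<open>s\<close> and \<open>t\<close> be candidates with \<open>|s| < |t|\<close>, so \<open>t = u s\<close>. Appending a witness of \<open>s\<close>
  makes \<open>s\<close> beat \<open>t\<close>, appending a witness of \<open>t\<close> makes \<open>t\<close> beat \<open>s\<close>; hence neither of \<open>s\<close> and the
  prefix of \<open>t\<close> of length \<open>|s|\<close> can be smaller than the other, i.e. \<open>s\<close> is also a prefix of \<open>t\<close>.
  If \<open>|t| \<le> 2|s|\<close> this gives \<open>s = u r\<close>, and with the witness \<open>z\<close> of \<open>s\<close> the inequality
  \<open>u r z = s z < t z = u u r z\<close> cancels to \<open>r z < s z\<close>, although \<open>r z\<close> is a suffix of \<open>w z\<close>.\<close>

lemma lex_less_iff_lexordp: "lex_less x y \<longleftrightarrow> ord_class.lexordp x y"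
  unfolding lexordp_conv_lexord lexord_take_index_conv lex_less_def by auto

lemma is_lexmin_lexordp:
  assumes "is_lexmin S m" "x \<in> S" "x \<noteq> m"
  shows "ord_class.lexordp m x"
  using assms unfolding is_lexmin_def lex_less_iff_lexordp by auto

lemma Suffixes_eq_image: "Suffixes w = (\<lambda>i. drop i w) ` {..<length w}"
  unfolding Suffixes_def by auto

lemma drop_append_mem_Suffixes:
  assumes "i \<le> length w" "y \<noteq> []"
  shows "drop i w @ y \<in> Suffixes (w @ y)"
  unfolding Suffixes_def using assms by (auto intro!: exI[of _ i] simp: neq_Nil_conv)

lemma lexordp_append_both:
  fixes u v :: "'a::linorder list"
  assumes "ord_class.lexordp u v" "length v \<le> length u"
  shows "ord_class.lexordp (u @ x) (v @ y)"
  using lexord_sufI assms unfolding lexordp_conv_lexord by blast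

lemma lexordp_asym:
  fixes x y :: "'a::linorder list"
  assumes "ord_class.lexordp x y"
  shows "\<not> ord_class.lexordp y x"
  using assms lexordp_trans lexordp_irreflexive' by blast

lemma take_length_eq_if_lexordp_both_ways:
  fixes s t :: "'a::linorder list"
  assumes "length s \<le> length t"
    and sz: "ord_class.lexordp (s @ z) (t @ z)" and ty: "ord_class.lexordp (t @ y) (s @ y)"
  shows "take (length s) t = s"
proof (rule ccontr)
  define p where "p = take (length s) t"
  define q where "q = drop (length s) t"
  have t: "t = p @ q" and len: "length p = length s"
    unfolding p_def q_def using assms(1) by simp_all
  assume "p \<noteq> s"
  then consider "ord_class.lexordp s p" | "ord_class.lexordp p s"
    using lexordp_linear[of s p] by blast
  then show False
  proof cases
    case 1
    then have "ord_class.lexordp (s @ y) (t @ y)"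
      using lexordp_append_both[of s p y "q @ y"] len t by simp
    then show False using ty lexordp_asym by blast
  next
    case 2
    then have "ord_class.lexordp (t @ z) (s @ z)"
      using lexordp_append_both[of p s "q @ z" z] len t by simp
    then show False using sz lexordp_asym by blast
  qed
qed

lemma LFCandE:
  assumes "x \<in> LFCand w"
  obtains i y where "x = drop i w" "i < length w" "y \<noteq> []"
    "is_lexmin (Suffixes (w @ y)) (x @ y)"
  using assms unfolding LFCand_def Suffixes_def by blast

lemma LFCand_length_gt_double:
  fixes w :: "'a::linorder list"
  assumes s: "s \<in> LFCand w" and t: "t \<in> LFCand w" and lt: "length s < length t"
  shows "2 * length s < length t"
proof (rule ccontr)
  assume short: "\<not> 2 * length s < length t"
  obtain i z where si: "s = drop i w" "i < length w" and z: "z \<noteq> []"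
    and zmin: "is_lexmin (Suffixes (w @ z)) (s @ z)"
    using s by (rule LFCandE)
  obtain j y where tj: "t = drop j w" "j < length w" and y: "y \<noteq> []"
    and ymin: "is_lexmin (Suffixes (w @ y)) (t @ y)"
    using t by (rule LFCandE)
  have "j < i" using lt si tj by auto
  define u where "u = take (i - j) t"
  have tus: "t = u @ s"
    unfolding u_def si tj using \<open>j < i\<close>
    by (metis append_take_drop_id drop_drop le_add_diff_inverse2 less_imp_le)
  have sz_tz: "ord_class.lexordp (s @ z) (t @ z)"
    using is_lexmin_lexordp[OF zmin drop_append_mem_Suffixes[of j w z]] tj z lt by fastforce
  have "ord_class.lexordp (t @ y) (s @ y)"
    using is_lexmin_lexordp[OF ymin drop_append_mem_Suffixes[of i w y]] si y lt by fastforce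
  then have "take (length s) t = s"
    using take_length_eq_if_lexordp_both_ways sz_tz lt by (metis less_imp_le)
  moreover have lu: "length u \<le> length s" using tus short by auto
  ultimately have "take (length u) s = u"
    using tus by (metis append_eq_conv_conj min_absorb1 take_take)
  then obtain r where sur: "s = u @ r" by (metis append_take_drop_id)
  have "r = drop (length u + i) w"
    using sur si by (metis append_eq_conv_conj drop_drop)
  moreover have "length u + i \<le> length w"
    using lu si by simp
  ultimately have rz: "r @ z \<in> Suffixes (w @ z)" using drop_append_mem_Suffixes[OF _ z] by metis
  moreover have "r @ z \<noteq> s @ z" using sur tus lt by auto
  ultimately have "ord_class.lexordp (s @ z) (r @ z)" using is_lexmin_lexordp[OF zmin] by blast
  moreover have "ord_class.lexordp (u @ (r @ z)) (u @ (s @ z))"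
    using sz_tz sur tus by simp
  then have "ord_class.lexordp (r @ z) (s @ z)" using lexordp_append_leftD by blast
  ultimately show False using lexordp_asym by blast
qed

lemma finite_LFCand: "finite (LFCand w)"
  unfolding LFCand_def Suffixes_eq_image by simp

lemma inj_on_length_LFCand: "inj_on length (LFCand w)"
  unfolding inj_on_def LFCand_def Suffixes_def by clarsimp (metis diff_diff_cancel less_imp_le)

theorem lemma6:
  fixes w :: "'a::{linorder,finite} list"
  assumes "w \<noteq> []"
  defines "L \<equiv> sorted_list_of_set (length ` LFCand w)"
  shows "\<forall>j. Suc j < card (LFCand w) \<longrightarrow> L ! (Suc j) > 2 * L ! j"
proof (intro allI impI)
  fix j assume j: "Suc j < card (LFCand w)"
  have "length L = card (LFCand w)"
    unfolding L_def using card_image[OF inj_on_length_LFCand] by simp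
  moreover have "sorted_wrt (<) L" unfolding L_def by simp
  ultimately have "L ! j < L ! Suc j" "L ! j \<in> set L" "L ! Suc j \<in> set L"
    using j by (auto simp: sorted_wrt_iff_nth_less)
  moreover have "set L = length ` LFCand w"
    unfolding L_def by (simp add: finite_LFCand)
  ultimately obtain s t where "s \<in> LFCand w" "t \<in> LFCand w"
    and "L ! j = length s" "L ! Suc j = length t" "length s < length t"
    by auto
  then show "L ! Suc j > 2 * L ! j" using LFCand_length_gt_double by metis
qed

end
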